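(* Let $\Lambda\ge1$ and let $K_0,\dots,K_\Lambda$ be non-negative integers. For $\lambda\in\{1,\dots,\Lambda\}$ define $f_\lambda:[0,\Lambda]\to\mathbb R$ by \[ f_\lambda(t)=K_\lambda\prod_{i=0}^{\lambda-1}\frac{\Lambda-t-i}{t+\lambda-i}\quad\text{for }0\le t\le \Lambda-\lambda+1,\qquad f_\lambda(t)=0\quad\text{for }\Lambda-\lambda+1\le t\le\Lambda, \] and let $f(t)=K_0+\sum_{\lambda=1}^{\Lambda}f_\lambda(t)$. Then $f$ is convex and non-increasing on $[0,\Lambda]$, and for every integer $t\in\{0,\dots,\Lambda\}$ one has $f(t)=\sum_{\lambda=0}^{\Lambda-t}K_\lambda\binom{\Lambda}{t+\lambda}/\binom{\Lambda}{t}$. In particular the sequence $t\mapsto\sum_{\lambda=0}^{\Lambda-t}K_\lambda\binom{\Lambda}{t+\lambda}/\binom{\Lambda}{t}$, $t\in\{0,\dots,\Lambda\}$, is convex and non-increasing.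
   Context: Convention: $\binom{n}{k}=0$ if $n<0$, $k<0$ or $n<k$. The two formulas defining $f_\lambda$ agree at $t=\Lambda-\lambda+1$ (both equal $0$). *)

theory Defs
  imports "HOL-Analysis.Analysis"
begin

text \<open>The piecewise function f_lambda on [0, Lambda] (for 1 \<le> lambda \<le> Lambda).
  Both formulas agree (value 0) at t = Lambda - lambda + 1.\<close>
definition f_lam :: "nat \<Rightarrow> (nat \<Rightarrow> nat) \<Rightarrow> nat \<Rightarrow> real \<Rightarrow> real" where
  "f_lam \<Lambda> K l t =
     (if t \<le> real \<Lambda> - real l + 1
      then real (K l) * (\<Prod>i<l. (real \<Lambda> - t - real i) / (t + real l - real i))
      else 0)"

definition f_tot :: "nat \<Rightarrow> (nat \<Rightarrow> nat) \<Rightarrow> real \<Rightarrow> real" where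
  "f_tot \<Lambda> K t = real (K 0) + (\<Sum>l = 1..\<Lambda>. f_lam \<Lambda> K l t)"

text \<open>The sequence value; nat binomials vanish when the lower index exceeds the upper.\<close>
definition seqval :: "nat \<Rightarrow> (nat \<Rightarrow> nat) \<Rightarrow> nat \<Rightarrow> real" where
  "seqval \<Lambda> K t =
     (\<Sum>l = 0..\<Lambda> - t. real (K l) * real (\<Lambda> choose (t + l)) / real (\<Lambda> choose t))"

end

theory Submission
  imports Defs
begin

text \<open>On \<open>[0, \<Lambda> - \<lambda> + 1]\<close> each \<open>f\<^sub>\<lambda>\<close> is \<open>K\<^sub>\<lambda>\<close> times a product of factors
  \<open>(\<Lambda> - i - t) / (t + \<lambda> - i) = (\<Lambda> + \<lambda> - 2i) / (t + \<lambda> - i) - 1\<close>, each non-negative,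
  non-increasing and convex. A product of non-negative, non-increasing convex functions is again
  such a function, and so is its extension by zero past the root \<open>\<Lambda> - \<lambda> + 1\<close> of the last
  factor; summing gives convexity and monotonicity of \<open>f\<close>. At an integer \<open>t\<close> the product equals
  \<open>C(\<Lambda>, t + \<lambda>) / C(\<Lambda>, t)\<close>, since both numerator and denominator are \<open>\<lambda>!\<close> times a binomial
  coefficient, so \<open>f\<close> interpolates the sequence, which therefore inherits both properties.\<close>

lemma convex_on_mul_antimono:
  fixes f g :: "real \<Rightarrow> real"
  assumes "convex_on S f" "convex_on S g" "antimono_on S f" "antimono_on S g"
    and "\<And>x. x \<in> S \<Longrightarrow> 0 \<le> f x" "\<And>x. x \<in> S \<Longrightarrow> 0 \<le> g x"
  shows "convex_on S (\<lambda>x. f x * g x)"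
proof (rule convex_onI)
  show "convex S"
    using assms(1) by (rule convex_on_imp_convex)
  fix t x y :: real
  assume t: "0 < t" "t < 1" and xy: "x \<in> S" "y \<in> S"
  define z where "z = (1 - t) *\<^sub>R x + t *\<^sub>R y"
  have "z \<in> S"
    using \<open>convex S\<close> xy t unfolding z_def by (simp add: convex_def)
  have similarly_ordered: "0 \<le> (f x - f y) * (g x - g y)"
    using assms(3,4) xy by (cases "x \<le> y") (auto simp: monotone_on_def mult_nonpos_nonpos)
  have "f z * g z \<le> ((1 - t) * f x + t * f y) * ((1 - t) * g x + t * g y)"
    using convex_onD[OF assms(1), of t x y] convex_onD[OF assms(2), of t x y] assms(5,6) xy t \<open>z \<in> S\<close>
    unfolding z_def by (intro mult_mono) auto
  also have "\<dots> = (1 - t) * (f x * g x) + t * (f y * g y) - t * (1 - t) * ((f x - f y) * (g x - g y))"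
    by (simp add: algebra_simps)
  also have "\<dots> \<le> (1 - t) * (f x * g x) + t * (f y * g y)"
    using similarly_ordered t by simp
  finally show "f z * g z \<le> (1 - t) * (f x * g x) + t * (f y * g y)" .
qed

lemma antimono_on_prod:
  fixes f :: "'i \<Rightarrow> real \<Rightarrow> real"
  assumes "\<And>i. i \<in> A \<Longrightarrow> antimono_on S (f i)" "\<And>i x. i \<in> A \<Longrightarrow> x \<in> S \<Longrightarrow> 0 \<le> f i x"
  shows "antimono_on S (\<lambda>x. \<Prod>i\<in>A. f i x)"
  using assms by (auto simp: monotone_on_def intro!: prod_mono)

lemma convex_on_prod_antimono:
  fixes f :: "'i \<Rightarrow> real \<Rightarrow> real"
  assumes "finite A" "convex S"
    and "\<And>i. i \<in> A \<Longrightarrow> convex_on S (f i)" "\<And>i. i \<in> A \<Longrightarrow> antimono_on S (f i)"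
    and "\<And>i x. i \<in> A \<Longrightarrow> x \<in> S \<Longrightarrow> 0 \<le> f i x"
  shows "convex_on S (\<lambda>x. \<Prod>i\<in>A. f i x)"
  using assms
proof (induction A rule: finite_induct)
  case empty
  then show ?case by (simp add: convex_on_const)
next
  case (insert j A)
  then show ?case
    by (simp, intro convex_on_mul_antimono antimono_on_prod prod_nonneg) auto
qed

lemma convex_on_sum_fun:
  fixes f :: "'i \<Rightarrow> 'a::real_vector \<Rightarrow> real"
  assumes "finite A" "convex S" "\<And>i. i \<in> A \<Longrightarrow> convex_on S (f i)"
  shows "convex_on S (\<lambda>x. \<Sum>i\<in>A. f i x)"
  using assms by (induction A rule: finite_induct) (auto simp: convex_on_const)

lemma antimono_on_sum:
  fixes f :: "'i \<Rightarrow> 'a::order \<Rightarrow> real"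
  assumes "\<And>i. i \<in> A \<Longrightarrow> antimono_on S (f i)"
  shows "antimono_on S (\<lambda>x. \<Sum>i\<in>A. f i x)"
  using assms by (auto simp: monotone_on_def intro!: sum_mono)

lemma convex_on_midpoint_le:
  fixes f :: "real \<Rightarrow> real"
  assumes "convex_on S f" "x \<in> S" "y \<in> S"
  shows "2 * f ((x + y) / 2) \<le> f x + f y"
  using convex_onD[OF assms(1), of "1 / 2" x y] assms(2,3) by (simp add: field_simps)

lemma convex_on_shifted_ratio:
  fixes a c :: real
  assumes "0 \<le> a + c"
  shows "convex_on {-c<..} (\<lambda>x. (a - x) / (x + c))"
proof (rule convex_on_realI)
  fix x assume "x \<in> {-c<..}"
  then show "((\<lambda>x. (a - x) / (x + c)) has_real_derivative - ((a + c) / (x + c)\<^sup>2)) (at x)"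
    by (auto intro!: derivative_eq_intros simp: field_simps power2_eq_square minus_divide_left)
next
  fix x y assume "x \<in> {-c<..}" "y \<in> {-c<..}" "x \<le> y"
  then have "(x + c)\<^sup>2 \<le> (y + c)\<^sup>2"
    by (intro power_mono) auto
  then have "(a + c) / (y + c)\<^sup>2 \<le> (a + c) / (x + c)\<^sup>2"
    using assms \<open>x \<in> {-c<..}\<close> \<open>y \<in> {-c<..}\<close> by (intro divide_left_mono) auto
  then show "- ((a + c) / (x + c)\<^sup>2) \<le> - ((a + c) / (y + c)\<^sup>2)"
    by simp
qed simp

lemma antimono_on_shifted_ratio:
  fixes a c :: real
  assumes "0 \<le> a + c"
  shows "antimono_on {-c<..} (\<lambda>x. (a - x) / (x + c))"
proof (rule monotone_onI)
  fix x y assume "x \<in> {-c<..}" "y \<in> {-c<..}" "x \<le> y"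
  moreover have "(a - y) * (x + c) \<le> (a - x) * (y + c)"
    using mult_left_mono[OF \<open>x \<le> y\<close> assms] by (simp add: algebra_simps)
  ultimately show "(a - y) / (y + c) \<le> (a - x) / (x + c)"
    by (simp add: divide_simps)
qed

lemma convex_on_extend_zero:
  fixes P :: "real \<Rightarrow> real"
  assumes conv: "convex_on {l..a} P" and nonneg: "\<And>x. x \<in> {l..a} \<Longrightarrow> 0 \<le> P x" and root: "P a = 0"
  shows "convex_on {l..b} (\<lambda>x. if x \<le> a then P x else 0)" (is "convex_on _ ?F")
proof (rule convex_on_linorderI)
  fix t x y :: real
  assume t: "0 < t" "t < 1" and x: "x \<in> {l..b}" and y: "y \<in> {l..b}" and "x < y"
  define z where "z = (1 - t) * x + t * y"
  have zx: "z - x = t * (y - x)" and yz: "y - z = (1 - t) * (y - x)"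
    by (simp_all add: z_def algebra_simps)
  have "0 < t * (y - x)" "0 < (1 - t) * (y - x)"
    using t \<open>x < y\<close> by simp_all
  then have "x < z" and "z < y"
    by (simp_all flip: zx yz)
  have "?F z \<le> (1 - t) * ?F x + t * ?F y"
  proof (cases "y \<le> a")
    case True
    then show ?thesis
      using convex_onD[OF conv, of t x y] x y t \<open>x < z\<close> \<open>z < y\<close> by (simp add: z_def)
  next
    case False
    then have Fy: "?F y = 0" by simp
    show ?thesis
    proof (cases "z < a")
      case False
      then have "?F z = 0" using root by auto
      then show ?thesis
        using Fy nonneg x t by auto
    next
      case True
      \<comment> \<open>\<open>P z\<close> lies below the chord from \<open>(x, P x)\<close> to the root \<open>(a, 0)\<close>, which lies
        below the chord from \<open>(x, P x)\<close> to \<open>(y, 0)\<close> because \<open>a < y\<close>.\<close>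
      define s where "s = (z - x) / (a - x)"
      have xa: "x < a" using True \<open>x < z\<close> by simp
      have "t = (z - x) / (y - x)"
        using zx \<open>x < y\<close> by simp
      also have "\<dots> \<le> s"
        unfolding s_def using \<open>x < z\<close> xa False by (intro divide_left_mono) auto
      finally have "t \<le> s" .
      have s01: "0 \<le> s" "s \<le> 1"
        using xa True \<open>x < z\<close> by (auto simp: s_def)
      have "s * (a - x) = z - x"
        using xa by (simp add: s_def)
      then have "(1 - s) * x + s * a = z"
        by (simp add: algebra_simps)
      then have "P z \<le> (1 - s) * P x + s * P a"
        using convex_onD[OF conv, of s x a] s01 x xa by auto
      also have "\<dots> \<le> (1 - t) * P x"
        using root \<open>t \<le> s\<close> nonneg[of x] x xa by (simp add: mult_right_mono)
      finally show ?thesis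
        using Fy True xa by simp
    qed
  qed
  then show "?F ((1 - t) *\<^sub>R x + t *\<^sub>R y) \<le> (1 - t) * ?F x + t * ?F y"
    unfolding z_def real_scaleR_def .
qed simp

lemma antimono_on_extend_zero:
  fixes P :: "real \<Rightarrow> real"
  assumes "antimono_on {l..a} P" "\<And>x. x \<in> {l..a} \<Longrightarrow> 0 \<le> P x"
  shows "antimono_on {l..b} (\<lambda>x. if x \<le> a then P x else 0)"
  using assms by (auto simp: monotone_on_def)

lemma prod_diff_of_nat_eq_fact_choose:
  "(\<Prod>i<k. of_nat m - of_nat i :: 'a::field_char_0) = fact k * of_nat (m choose k)"
  by (simp add: binomial_gbinomial gbinomial_mult_fact atLeast0LessThan)

lemma prod_ratio_eq_choose_ratio:
  assumes "t + l \<le> n"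
  shows "(\<Prod>i<l. (real n - real t - real i) / (real t + real l - real i))
       = real (n choose (t + l)) / real (n choose t)"
proof -
  have num: "(\<Prod>i<l. real n - real t - real i) = fact l * real (n - t choose l)"
    using prod_diff_of_nat_eq_fact_choose[of "n - t" l] assms by simp
  have den: "(\<Prod>i<l. real t + real l - real i) = fact l * real (t + l choose l)"
    using prod_diff_of_nat_eq_fact_choose[of "t + l" l] by simp
  have "(n choose (t + l)) * (t + l choose l) = (n choose t) * (n - t choose l)"
    using choose_mult[of t "t + l" n] assms binomial_symmetric[of t "t + l"] by simp
  then have "real (n choose (t + l)) * real (t + l choose l) = real (n choose t) * real (n - t choose l)"
    by (metis of_nat_mult)
  moreover have "0 < real (n choose t)" "0 < real (t + l choose l)"
    using assms by simp_all
  ultimately show ?thesis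
    unfolding prod_dividef num den by (simp add: field_simps)
qed

lemma f_lam_factor:
  assumes "i < l" "l \<le> \<Lambda>"
  defines "h \<equiv> \<lambda>x. (real \<Lambda> - x - real i) / (x + real l - real i)"
  shows "convex_on {0..real \<Lambda> - real l + 1} h"
    and "antimono_on {0..real \<Lambda> - real l + 1} h"
    and "\<And>x. x \<in> {0..real \<Lambda> - real l + 1} \<Longrightarrow> 0 \<le> h x"
proof -
  have h_eq: "h = (\<lambda>x. (real \<Lambda> - real i - x) / (x + (real l - real i)))"
    by (auto simp: h_def algebra_simps)
  have pos: "0 \<le> (real \<Lambda> - real i) + (real l - real i)"
    using assms by simp
  have sub: "{0..real \<Lambda> - real l + 1} \<subseteq> {-(real l - real i)<..}"
    using assms by auto
  show "convex_on {0..real \<Lambda> - real l + 1} h"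
    unfolding h_eq by (rule convex_on_subset[OF convex_on_shifted_ratio[OF pos] sub]) simp
  show "antimono_on {0..real \<Lambda> - real l + 1} h"
    unfolding h_eq by (rule monotone_on_subset[OF antimono_on_shifted_ratio[OF pos] sub])
  show "0 \<le> h x" if "x \<in> {0..real \<Lambda> - real l + 1}" for x
    using that assms by (auto simp: h_def)
qed

lemma f_lam_product:
  fixes K :: "nat \<Rightarrow> nat"
  assumes "1 \<le> l" "l \<le> \<Lambda>"
  defines "P \<equiv> \<lambda>x. real (K l) * (\<Prod>i<l. (real \<Lambda> - x - real i) / (x + real l - real i))"
  shows "convex_on {0..real \<Lambda> - real l + 1} P"
    and "antimono_on {0..real \<Lambda> - real l + 1} P"
    and "\<And>x. x \<in> {0..real \<Lambda> - real l + 1} \<Longrightarrow> 0 \<le> P x"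
    and "P (real \<Lambda> - real l + 1) = 0"
proof -
  let ?I = "{0..real \<Lambda> - real l + 1}"
  define h where "h = (\<lambda>i x. (real \<Lambda> - x - real i) / (x + real l - real i))"
  have h_conv: "convex_on ?I (h i)" and h_anti: "antimono_on ?I (h i)"
    and h_nonneg: "\<And>x. x \<in> ?I \<Longrightarrow> 0 \<le> h i x" if "i < l" for i
    using f_lam_factor[OF that \<open>l \<le> \<Lambda>\<close>] unfolding h_def by simp_all
  have P_eq: "P = (\<lambda>x. real (K l) * (\<Prod>i<l. h i x))"
    by (simp add: P_def h_def)
  have "antimono_on ?I (\<lambda>x. \<Prod>i<l. h i x)"
    using h_anti h_nonneg by (intro antimono_on_prod) auto
  then show "antimono_on ?I P"
    unfolding P_eq monotone_on_def by (auto intro: mult_left_mono)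
  show "convex_on ?I P"
    unfolding P_eq using h_conv h_anti h_nonneg by (intro convex_on_cmul convex_on_prod_antimono) auto
  show "0 \<le> P x" if "x \<in> ?I" for x
    unfolding P_eq by (intro mult_nonneg_nonneg prod_nonneg) (use h_nonneg that in auto)
  have "l - 1 \<in> {..<l}" "h (l - 1) (real \<Lambda> - real l + 1) = 0"
    using assms by (auto simp: h_def)
  then show "P (real \<Lambda> - real l + 1) = 0"
    unfolding P_eq by (subst prod_zero) auto
qed

lemma convex_on_f_lam:
  fixes K :: "nat \<Rightarrow> nat"
  assumes "1 \<le> l" "l \<le> \<Lambda>"
  shows "convex_on {0..real \<Lambda>} (f_lam \<Lambda> K l)"
  using convex_on_extend_zero[OF f_lam_product(1,3,4)[OF assms, where K = K]]
  by (simp add: f_lam_def[abs_def])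

lemma antimono_on_f_lam:
  fixes K :: "nat \<Rightarrow> nat"
  assumes "1 \<le> l" "l \<le> \<Lambda>"
  shows "antimono_on {0..real \<Lambda>} (f_lam \<Lambda> K l)"
  using antimono_on_extend_zero[OF f_lam_product(2,3)[OF assms, where K = K]]
  by (simp add: f_lam_def[abs_def])

lemma convex_on_f_tot: "convex_on {0..real \<Lambda>} (f_tot \<Lambda> K)"
proof -
  have "convex_on {0..real \<Lambda>} (\<lambda>x. \<Sum>l = 1..\<Lambda>. f_lam \<Lambda> K l x)"
    by (rule convex_on_sum_fun) (auto intro: convex_on_f_lam)
  then show ?thesis
    unfolding f_tot_def[abs_def] by (intro convex_on_add) (simp_all add: convex_on_const)
qed

lemma antimono_on_f_tot: "antimono_on {0..real \<Lambda>} (f_tot \<Lambda> K)"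
proof -
  have "antimono_on {0..real \<Lambda>} (\<lambda>x. \<Sum>l = 1..\<Lambda>. f_lam \<Lambda> K l x)"
    by (rule antimono_on_sum) (auto intro: antimono_on_f_lam)
  then show ?thesis
    unfolding f_tot_def[abs_def] monotone_on_def by simp
qed

lemma f_lam_of_nat:
  assumes "t \<le> \<Lambda>" "1 \<le> l"
  shows "f_lam \<Lambda> K l (real t) = real (K l) * real (\<Lambda> choose (t + l)) / real (\<Lambda> choose t)"
proof (cases "t + l \<le> \<Lambda>")
  case True
  then show ?thesis
    using prod_ratio_eq_choose_ratio[OF True] by (simp add: f_lam_def)
next
  case False
  have "f_lam \<Lambda> K l (real t) = 0"
  proof (cases "t + l = \<Lambda> + 1")
    case True
    then have "l - 1 \<in> {..<l}" "real \<Lambda> - real t - real (l - 1) = 0"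
      using assms by auto
    then have "(\<Prod>i<l. (real \<Lambda> - real t - real i) / (real t + real l - real i)) = 0"
      by (intro prod_zero) (auto intro!: bexI[of _ "l - 1"])
    with True show ?thesis
      by (simp add: f_lam_def)
  next
    case False
    with \<open>\<not> t + l \<le> \<Lambda>\<close> show ?thesis
      by (simp add: f_lam_def)
  qed
  with False show ?thesis
    by simp
qed

lemma f_tot_of_nat:
  assumes "t \<le> \<Lambda>"
  shows "f_tot \<Lambda> K (real t) = seqval \<Lambda> K t"
proof -
  let ?g = "\<lambda>l. real (K l) * real (\<Lambda> choose (t + l)) / real (\<Lambda> choose t)"
  have "seqval \<Lambda> K t = (\<Sum>l = 0..\<Lambda>. ?g l)"
    unfolding seqval_def by (rule sum.mono_neutral_left) auto
  also have "\<dots> = ?g 0 + (\<Sum>l = 1..\<Lambda>. ?g l)"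
    by (simp add: sum.atLeast_Suc_atMost)
  also have "?g 0 = real (K 0)"
    using assms by simp
  also have "(\<Sum>l = 1..\<Lambda>. ?g l) = (\<Sum>l = 1..\<Lambda>. f_lam \<Lambda> K l (real t))"
    using f_lam_of_nat[OF assms] by (intro sum.cong) auto
  finally show ?thesis
    unfolding f_tot_def by simp
qed

theorem lemma3:
  fixes \<Lambda> :: nat and K :: "nat \<Rightarrow> nat"
  assumes "\<Lambda> \<ge> 1"
  shows "convex_on {0..real \<Lambda>} (f_tot \<Lambda> K)
    \<and> (\<forall>x\<in>{0..real \<Lambda>}. \<forall>y\<in>{0..real \<Lambda>}. x \<le> y \<longrightarrow> f_tot \<Lambda> K y \<le> f_tot \<Lambda> K x)
    \<and> (\<forall>t\<le>\<Lambda>. f_tot \<Lambda> K (real t) = seqval \<Lambda> K t)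
    \<and> (\<forall>t. t + 2 \<le> \<Lambda> \<longrightarrow> 2 * seqval \<Lambda> K (t + 1) \<le> seqval \<Lambda> K t + seqval \<Lambda> K (t + 2))
    \<and> (\<forall>t. t + 1 \<le> \<Lambda> \<longrightarrow> seqval \<Lambda> K (t + 1) \<le> seqval \<Lambda> K t)"
proof -
  have convex: "convex_on {0..real \<Lambda>} (f_tot \<Lambda> K)"
    by (rule convex_on_f_tot)
  have antimono: "antimono_on {0..real \<Lambda>} (f_tot \<Lambda> K)"
    by (rule antimono_on_f_tot)
  have interpolates: "f_tot \<Lambda> K (real t) = seqval \<Lambda> K t" if "t \<le> \<Lambda>" for t
    using that by (rule f_tot_of_nat)
  have "2 * seqval \<Lambda> K (t + 1) \<le> seqval \<Lambda> K t + seqval \<Lambda> K (t + 2)" if "t + 2 \<le> \<Lambda>" for t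
  proof -
    have mid: "(real t + real (t + 2)) / 2 = real (t + 1)"
      by simp
    have "2 * f_tot \<Lambda> K (real (t + 1)) \<le> f_tot \<Lambda> K (real t) + f_tot \<Lambda> K (real (t + 2))"
      using convex_on_midpoint_le[OF convex, of "real t" "real (t + 2)"] that unfolding mid by auto
    then show ?thesis
      using that interpolates[of t] interpolates[of "t + 1"] interpolates[of "t + 2"] by simp
  qed
  moreover have "seqval \<Lambda> K (t + 1) \<le> seqval \<Lambda> K t" if "t + 1 \<le> \<Lambda>" for t
    using monotone_onD[OF antimono, of "real t" "real (t + 1)"] that
      interpolates[of t] interpolates[of "t + 1"] by simp
  ultimately show ?thesis
    using convex antimono interpolates by (auto simp: monotone_on_def)
qed

end
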